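(* Let $n\ge2$ and let $X_1,\dots,X_n$ be real-valued mutually independent random variables with $X_{n:n}=\max_i X_i\in\mathcal{L}$. Suppose either (a) $X_{n:n}\in\mathrm{GMDA}(h)\cap\mathcal{L}$ for some positive $h$ and $$\lim_{x\to\infty}\frac{\mathbb{P}(X_i>Lh(x))\,\mathbb{P}(X_j>Lh(x))}{\mathbb{P}(X_{n:n}>x)}=0\ \text{for all }1\le i\ne j\le n\text{ and some }L>0,\qquad(\dagger)$$ or (b) there exists $h\in\mathcal{H}^\ast_{X_{n:n}}$ such that $(\dagger)$ holds. Then $\mathbb{P}\big(\sum_{i=1}^nX_i>x\big)\sim\sum_{i=1}^n\mathbb{P}(X_i>x)$ as $x\to\infty$.
   Context: Real-valued random variables are assumed not concentrated on $(-\infty,0]$. For a distribution function $F$, $\overline{F}=1-F$, $x_F=\sup\{x:F(x)<1\}$. $F\in\mathrm{GMDA}(h)$ means $\lim_{x\to x_F}\overline{F}(x+yh(x))/\overline{F}(x)=e^{-y}$ for all $y\in\mathbb{R}$. $F\in\mathcal{L}$ means $\overline{F}(x)>0$ for all $x\ge0$ and $\overline{F}(x+y)\sim\overline{F}(x)$ for every $y\in\mathbb{R}$. For $F\in\mathcal{L}$, $\mathcal{H}_F$ is the set of eventually positive $h$ with $h(x)=o(x)$, $\overline{F}(x+yh(x))\sim\overline{F}(x)$ for all $y\in\mathbb{R}$, and $\limsup_{x\to\infty}h(x+yh(x))/h(x)<\infty$ for all $y\in\mathbb{R}$; $\mathcal{H}^\ast_F=\{h\in\mathcal{H}_F:h(x)\to\infty\}$.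 *)

theory Defs
  imports "HOL-Probability.Probability" "HOL-Library.Landau_Symbols"
begin

definition tail :: "'a measure \<Rightarrow> ('a \<Rightarrow> real) \<Rightarrow> real \<Rightarrow> real" where
  "tail M Y x = measure M {\<omega> \<in> space M. Y \<omega> > x}"

definition right_endpoint :: "(real \<Rightarrow> real) \<Rightarrow> ereal" where
  "right_endpoint Fbar = Sup {ereal x | x. Fbar x > 0}"

definition endpoint_filter :: "(real \<Rightarrow> real) \<Rightarrow> real filter" where
  "endpoint_filter Fbar =
     (if right_endpoint Fbar = \<infinity> then at_top
      else at_left (real_of_ereal (right_endpoint Fbar)))"

definition GMDA :: "(real \<Rightarrow> real) \<Rightarrow> (real \<Rightarrow> real) \<Rightarrow> bool" where
  "GMDA Fbar h \<longleftrightarrow>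
     (\<forall>y::real. ((\<lambda>x. Fbar (x + y * h x) / Fbar x) \<longlongrightarrow> exp (- y)) (endpoint_filter Fbar))"

definition long_tailed :: "(real \<Rightarrow> real) \<Rightarrow> bool" where
  "long_tailed Fbar \<longleftrightarrow>
     (\<forall>x\<ge>0. Fbar x > 0) \<and> (\<forall>y::real. (\<lambda>x. Fbar (x + y)) \<sim>[at_top] Fbar)"

definition H_class :: "(real \<Rightarrow> real) \<Rightarrow> (real \<Rightarrow> real) set" where
  "H_class Fbar = {h. eventually (\<lambda>x. h x > 0) at_top
      \<and> h \<in> o[at_top](\<lambda>x. x)
      \<and> (\<forall>y::real. (\<lambda>x. Fbar (x + y * h x)) \<sim>[at_top] Fbar)
      \<and> (\<forall>y::real. Limsup at_top (\<lambda>x. ereal (h (x + y * h x) / h x)) < \<infinity>)}"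

definition H_star :: "(real \<Rightarrow> real) \<Rightarrow> (real \<Rightarrow> real) set" where
  "H_star Fbar = {h \<in> H_class Fbar. filterlim h at_top at_top}"

end

theory Submission
  imports Defs
begin

text \<open>Write F for the tail of the maximum. By Bonferroni's inequality and independence,
  \<open>\<Sum>i P(X\<^sub>i > x)\<close> differs from F(x) by at most
  \<open>\<Sum>i\<noteq>j P(X\<^sub>i > x) P(X\<^sub>j > x)\<close>, which is o(F(x)) by the pair condition,
  so it suffices to show \<open>P(\<Sum>X\<^sub>i > x) \<sim> F(x)\<close>.
  Lower bound: one summand above x + nK with all others at least -K forces the sum above x;
  long-tailedness absorbs the shift nK, and the probability of some other summand being
  below -K is small for large K.
  Upper bound: if the sum exceeds x, then either two summands exceed g(x) = L h(x)
  (probability o(F(x))), or the maximum exceeds x - (n-1)K (probability \<sim> F(x)), or one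
  summand exceeds x - (n-1)g(x) while another exceeds K. The last event has probability
  at most \<open>n F(x - n g(x)) \<Sum>j P(X\<^sub>j > K) \<le> n B F(x) \<Sum>j P(X\<^sub>j > K)\<close>, where
  the bound \<open>F(x - c h(x)) \<le> B F(x)\<close> is what either GMDA(h) or h \<in> H provides;
  it is small relative to F(x) once K is large.\<close>

section \<open>Tail functions\<close>

context prob_space
begin

lemma tail_nonneg: "0 \<le> tail M Y x"
  unfolding tail_def by simp

lemma tail_antimono:
  assumes "Y \<in> borel_measurable M" "x \<le> y"
  shows "tail M Y y \<le> tail M Y x"
  unfolding tail_def using assms by (intro finite_measure_mono) auto

lemma tail_tendsto_0:
  assumes Y: "Y \<in> borel_measurable M"
  shows "(tail M Y \<longlongrightarrow> 0) at_top"
proof -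
  have "(\<lambda>k. measure M {\<omega>\<in>space M. Y \<omega> > real k})
          \<longlonglongrightarrow> measure M (\<Inter>k. {\<omega>\<in>space M. Y \<omega> > real k})"
    using Y by (intro finite_Lim_measure_decseq) (auto simp: decseq_def)
  also have "(\<Inter>k. {\<omega>\<in>space M. Y \<omega> > real k}) = {}"
    by auto (meson linorder_not_less real_arch_simple)
  finally have "(\<lambda>k. - tail M Y (real k)) \<longlonglongrightarrow> - 0"
    unfolding tail_def by (intro tendsto_minus) simp
  then have "((\<lambda>x. - tail M Y x) \<longlongrightarrow> - 0) at_top"
    by (rule tendsto_at_topI_sequentially_real[rotated])
      (auto simp: mono_def intro: tail_antimono[OF Y])
  then show ?thesis
    using tendsto_minus_cancel by fastforce
qed

lemma prob_indep_pair:
  assumes "indep_vars (\<lambda>_. borel) X I" "i \<in> I" "j \<in> I" "i \<noteq> j"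
    and "A \<in> sets borel" "B \<in> sets borel"
  shows "prob {\<omega>\<in>space M. X i \<omega> \<in> A \<and> X j \<omega> \<in> B}
           = prob {\<omega>\<in>space M. X i \<omega> \<in> A} * prob {\<omega>\<in>space M. X j \<omega> \<in> B}"
proof -
  define C where "C k = (if k = i then A else B)" for k
  have "prob (\<Inter>k\<in>{i, j}. X k -` C k \<inter> space M) = (\<Prod>k\<in>{i, j}. prob (X k -` C k \<inter> space M))"
    using assms by (intro indep_varsD) (auto simp: C_def)
  moreover have "(\<Inter>k\<in>{i, j}. X k -` C k \<inter> space M) = {\<omega>\<in>space M. X i \<omega> \<in> A \<and> X j \<omega> \<in> B}"
    using assms(4) by (auto simp: C_def)
  ultimately show ?thesis
    using assms(4) by (simp add: C_def vimage_def Int_def conj_commute)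
qed

lemma sum_prob_le_prob_Union_plus_pairs:
  assumes "finite I" "B ` I \<subseteq> events"
  shows "(\<Sum>i\<in>I. prob (B i))
           \<le> prob (\<Union>i\<in>I. B i) + (\<Sum>i\<in>I. \<Sum>j\<in>I-{i}. prob (B i \<inter> B j))"
proof -
  define C where "C i = B i - (\<Union>j\<in>I-{i}. B j)" for i
  have C: "C ` I \<subseteq> events" "disjoint_family_on C I"
    using assms unfolding C_def disjoint_family_on_def by auto
  have "prob (B i) \<le> prob (C i) + (\<Sum>j\<in>I-{i}. prob (B i \<inter> B j))" if i: "i \<in> I" for i
  proof -
    have U: "(\<Union>j\<in>I-{i}. B i \<inter> B j) \<in> events"
      using assms i by (intro sets.finite_UN) auto
    have "prob (B i) \<le> prob (C i \<union> (\<Union>j\<in>I-{i}. B i \<inter> B j))"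
      using assms C i U by (intro finite_measure_mono) (auto simp: C_def)
    also have "\<dots> \<le> prob (C i) + prob (\<Union>j\<in>I-{i}. B i \<inter> B j)"
      using C i U by (intro measure_subadditive) auto
    also have "prob (\<Union>j\<in>I-{i}. B i \<inter> B j) \<le> (\<Sum>j\<in>I-{i}. prob (B i \<inter> B j))"
      using assms i by (intro finite_measure_subadditive_finite) auto
    finally show ?thesis by simp
  qed
  then have "(\<Sum>i\<in>I. prob (B i)) \<le> (\<Sum>i\<in>I. prob (C i) + (\<Sum>j\<in>I-{i}. prob (B i \<inter> B j)))"
    by (rule sum_mono)
  also have "\<dots> = prob (\<Union>i\<in>I. C i) + (\<Sum>i\<in>I. \<Sum>j\<in>I-{i}. prob (B i \<inter> B j))"
    using assms(1) C by (simp add: sum.distrib finite_measure_finite_Union)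
  also have "prob (\<Union>i\<in>I. C i) \<le> prob (\<Union>i\<in>I. B i)"
    using assms by (intro finite_measure_mono) (auto simp: C_def)
  finally show ?thesis by simp
qed

lemma prob_Union_pairs_le:
  assumes "finite I" "\<And>i j. i \<in> I \<Longrightarrow> j \<in> I \<Longrightarrow> E i j \<in> events"
  shows "prob (\<Union>i\<in>I. \<Union>j\<in>I-{i}. E i j) \<le> (\<Sum>i\<in>I. \<Sum>j\<in>I-{i}. prob (E i j))"
proof -
  have "prob (\<Union>i\<in>I. \<Union>j\<in>I-{i}. E i j) \<le> (\<Sum>i\<in>I. prob (\<Union>j\<in>I-{i}. E i j))"
    using assms by (intro finite_measure_subadditive_finite) auto
  also have "\<dots> \<le> (\<Sum>i\<in>I. \<Sum>j\<in>I-{i}. prob (E i j))"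
    using assms by (intro sum_mono finite_measure_subadditive_finite) auto
  finally show ?thesis .
qed

end

section \<open>Bounded shifts of a tail\<close>

definition shift_bounded :: "(real \<Rightarrow> real) \<Rightarrow> (real \<Rightarrow> real) \<Rightarrow> bool" where
  "shift_bounded Fb g \<longleftrightarrow> eventually (\<lambda>x. g x < x) at_top
     \<and> (\<exists>B>0. eventually (\<lambda>x. Fb (x - g x) \<le> B * Fb x) at_top)"

lemma long_tailed_eventually_pos:
  assumes "long_tailed Fb"
  shows "eventually (\<lambda>x. 0 < Fb x) at_top"
  using eventually_ge_at_top[of 0] by eventually_elim (use assms in \<open>simp add: long_tailed_def\<close>)

lemma long_tailed_ratio_tendsto:
  assumes "long_tailed Fb"
  shows "((\<lambda>x. Fb (x + y) / Fb x) \<longlongrightarrow> 1) at_top"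
proof -
  have "eventually (\<lambda>x. Fb (x + y) \<noteq> 0 \<or> Fb x \<noteq> 0) at_top"
    using long_tailed_eventually_pos[OF assms] by eventually_elim simp
  then show ?thesis
    using assms asymp_equivD_strong unfolding long_tailed_def by blast
qed

lemma endpoint_filter_eq_at_top:
  assumes "\<forall>x\<ge>0. 0 < Fb x"
  shows "endpoint_filter Fb = at_top"
proof -
  have "Sup {ereal x |x. 0 < Fb x} = \<infinity>"
    unfolding Sup_eq_top_iff[where 'a=ereal, unfolded top_ereal_def]
  proof (intro allI impI)
    fix z :: ereal
    assume "z < \<infinity>"
    then obtain r where "z \<le> ereal r"
      by (cases z) auto
    then have "z < ereal (max r 0 + 1)"
      by (simp add: le_less_trans)
    moreover have "0 < Fb (max r 0 + 1)"
      using assms by simp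
    ultimately show "\<exists>i\<in>{ereal x |x. 0 < Fb x}. z < i"
      by blast
  qed
  then show ?thesis
    unfolding endpoint_filter_def right_endpoint_def by simp
qed

lemma GMDA_imp_shift_bounded:
  assumes anti: "antimono Fb" and pos: "\<forall>x\<ge>0. 0 < Fb x" and lim: "(Fb \<longlongrightarrow> 0) at_top"
    and "GMDA Fb h" "0 < c"
  shows "shift_bounded Fb (\<lambda>x. c * h x)"
proof -
  have "((\<lambda>x. Fb (x + (- c) * h x) / Fb x) \<longlongrightarrow> exp (- (- c))) at_top"
    using assms endpoint_filter_eq_at_top[OF pos] unfolding GMDA_def by metis
  then have "((\<lambda>x. Fb (x - c * h x) / Fb x) \<longlongrightarrow> exp c) at_top"
    by simp
  then have "eventually (\<lambda>x. Fb (x - c * h x) / Fb x < exp c + 1) at_top"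
    by (rule order_tendstoD(2)) simp_all
  moreover have "eventually (\<lambda>x. Fb x < Fb 0 / (exp c + 1)) at_top"
    using pos by (intro order_tendstoD(2)[OF lim]) (simp add: add_pos_pos)
  ultimately have "eventually (\<lambda>x. c * h x < x \<and> Fb (x - c * h x) \<le> (exp c + 1) * Fb x) at_top"
    using eventually_ge_at_top[of 0]
  proof eventually_elim
    case (elim x)
    have bound: "Fb (x - c * h x) < (exp c + 1) * Fb x"
      using elim pos by (simp add: divide_less_eq mult.commute)
    moreover have "(exp c + 1) * Fb x < Fb 0"
      using elim(2) by (simp add: less_divide_eq mult.commute add_pos_pos)
    \<comment> \<open>by antitonicity, \<open>Fb (x - c * h x) < Fb 0\<close> rules out \<open>x - c * h x \<le> 0\<close>\<close>
    then have "c * h x < x"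
      using bound antimonoD[OF anti, of "x - c * h x" 0] by (cases "c * h x < x") auto
    ultimately show ?case by simp
  qed
  then show ?thesis
    unfolding shift_bounded_def by (auto intro!: exI[of _ "exp c + 1"] add_pos_pos elim: eventually_mono)
qed

lemma H_class_imp_shift_bounded:
  assumes pos: "\<forall>x\<ge>0. 0 < Fb x" and "h \<in> H_class Fb" "0 < c"
  shows "shift_bounded Fb (\<lambda>x. c * h x)"
proof -
  have small: "h \<in> o[at_top](\<lambda>x. x)" and insens: "(\<lambda>x. Fb (x + (- c) * h x)) \<sim>[at_top] Fb"
    using assms(2) unfolding H_class_def by blast+
  have "eventually (\<lambda>x. norm (h x) \<le> 1 / (2 * c) * norm x) at_top"
    using landau_o.smallD[OF small, of "1 / (2 * c)"] \<open>0 < c\<close> by simp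
  then have below: "eventually (\<lambda>x. c * h x < x) at_top"
    using eventually_gt_at_top[of 0]
  proof eventually_elim
    case (elim x)
    then have "c * \<bar>h x\<bar> \<le> x / 2"
      using \<open>0 < c\<close> by (simp add: field_simps)
    moreover have "c * h x \<le> c * \<bar>h x\<bar>"
      using \<open>0 < c\<close> by (intro mult_left_mono) auto
    ultimately show ?case
      using elim by linarith
  qed
  have "((\<lambda>x. Fb (x - c * h x) / Fb x) \<longlongrightarrow> 1) at_top"
  proof -
    have "eventually (\<lambda>x. Fb (x + (- c) * h x) \<noteq> 0 \<or> Fb x \<noteq> 0) at_top"
      using eventually_ge_at_top[of 0] by eventually_elim (use pos in auto)
    from asymp_equivD_strong[OF insens this] show ?thesis
      by simp
  qed
  then have "eventually (\<lambda>x. Fb (x - c * h x) / Fb x < 2) at_top"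
    by (rule order_tendstoD(2)) simp
  then have "eventually (\<lambda>x. Fb (x - c * h x) \<le> 2 * Fb x) at_top"
    using eventually_ge_at_top[of 0]
    by eventually_elim (use pos in \<open>simp add: divide_less_eq mult.commute\<close>)
  then show ?thesis
    using below unfolding shift_bounded_def by (intro conjI exI[of _ 2]) auto
qed

section \<open>Sums of independent random variables\<close>

lemma component_gt_of_sum_gt:
  fixes v :: "nat \<Rightarrow> real"
  assumes "k < n" "x < (\<Sum>i<n. v i)" "\<And>j. j < n \<Longrightarrow> j \<noteq> k \<Longrightarrow> v j \<le> c"
  shows "x - (real n - 1) * c < v k"
proof -
  have "(\<Sum>j\<in>{..<n}-{k}. v j) \<le> (\<Sum>j\<in>{..<n}-{k}. c)"
    using assms(3) by (intro sum_mono) auto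
  also have "\<dots> = (real n - 1) * c"
    using assms(1) by (simp add: of_nat_diff)
  finally show ?thesis
    using assms(1,2) sum.remove[of "{..<n}" k v] by simp
qed

lemma sum_gt_of_component_gt:
  fixes v :: "nat \<Rightarrow> real"
  assumes "k < n" "a < v k" "\<And>j. j < n \<Longrightarrow> j \<noteq> k \<Longrightarrow> - c \<le> v j"
  shows "a - (real n - 1) * c < (\<Sum>i<n. v i)"
proof -
  have "- (real n - 1) * c = (\<Sum>j\<in>{..<n}-{k}. - c)"
    using assms(1) by (simp add: of_nat_diff algebra_simps)
  also have "\<dots> \<le> (\<Sum>j\<in>{..<n}-{k}. v j)"
    using assms(3) by (intro sum_mono) auto
  finally show ?thesis
    using assms(1,2) sum.remove[of "{..<n}" k v] by (simp add: algebra_simps)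
qed

lemma sum_gt_cases:
  fixes v :: "nat \<Rightarrow> real"
  assumes sum_gt: "x < (\<Sum>i<n. v i)" and "real n * g \<le> x"
  obtains i j where "i < n" "j < n" "i \<noteq> j" "g < v i" "g < v j"
    | k where "k < n" "x - (real n - 1) * K < v k"
    | k j where "k < n" "j < n" "k \<noteq> j" "x - (real n - 1) * g < v k" "K < v j"
proof -
  obtain k where k: "k < n" "g < v k"
  proof (rule ccontr)
    assume "\<not> thesis"
    with that have "(\<Sum>i<n. v i) \<le> (\<Sum>i<n. g)"
      by (intro sum_mono) (meson lessThan_iff not_le)
    with assms show False
      by simp
  qed
  consider (two_above_g) j where "j < n" "j \<noteq> k" "g < v j"
    | (one_large) "x - (real n - 1) * g < v k" "\<And>j. j < n \<Longrightarrow> j \<noteq> k \<Longrightarrow> v j \<le> K"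
    | (two_large) j where "x - (real n - 1) * g < v k" "j < n" "j \<noteq> k" "K < v j"
    using component_gt_of_sum_gt[OF k(1) sum_gt] by (meson not_le)
  then show ?thesis
  proof cases
    case two_above_g
    then show ?thesis using that(1) k by blast
  next
    case one_large
    then show ?thesis using that(2) k component_gt_of_sum_gt[OF k(1) sum_gt] by blast
  next
    case two_large
    then show ?thesis using that(3) k by blast
  qed
qed

locale indep_real_family = prob_space +
  fixes X :: "nat \<Rightarrow> 'a \<Rightarrow> real" and n :: nat
  assumes X_measurable [measurable]: "\<And>i. X i \<in> borel_measurable M"
    and indep: "indep_vars (\<lambda>_. borel) X {..<n}"
    and n_pos: "0 < n"
begin

abbreviation tail_max :: "real \<Rightarrow> real" where
  "tail_max \<equiv> tail M (\<lambda>\<omega>. MAX i\<in>{..<n}. X i \<omega>)"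

abbreviation tail_sum :: "real \<Rightarrow> real" where
  "tail_sum \<equiv> tail M (\<lambda>\<omega>. \<Sum>i<n. X i \<omega>)"

abbreviation pair_tails :: "real \<Rightarrow> real" where
  "pair_tails t \<equiv> \<Sum>i<n. \<Sum>j\<in>{..<n}-{i}. tail M (X i) t * tail M (X j) t"

abbreviation left_tails :: "real \<Rightarrow> real" where
  "left_tails K \<equiv> \<Sum>j<n. tail M (\<lambda>\<omega>. - X j \<omega>) K"

lemma prob_both_gt:
  assumes "i < n" "j < n" "i \<noteq> j"
  shows "prob {\<omega>\<in>space M. s < X i \<omega> \<and> t < X j \<omega>} = tail M (X i) s * tail M (X j) t"
  using prob_indep_pair[OF indep, of i j "{s<..}" "{t<..}"] assms unfolding tail_def by simp

lemma tail_le_tail_max: "i < n \<Longrightarrow> tail M (X i) t \<le> tail_max t"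
  unfolding tail_def by (intro finite_measure_mono) (auto intro: less_le_trans[OF _ Max_ge])

lemma tail_max_eq_prob_Union:
  "tail_max t = prob (\<Union>i<n. {\<omega>\<in>space M. t < X i \<omega>})"
  using n_pos unfolding tail_def by (intro arg_cong[where f=prob]) (auto simp: Max_gr_iff lessThan_empty_iff)

lemma tail_max_le_sum_tails: "tail_max t \<le> (\<Sum>i<n. tail M (X i) t)"
  unfolding tail_max_eq_prob_Union unfolding tail_def by (intro finite_measure_subadditive_finite) auto

lemma sum_tails_le_tail_max_plus_pair_tails:
  "(\<Sum>i<n. tail M (X i) t) \<le> tail_max t + pair_tails t"
proof -
  have "(\<Sum>i<n. tail M (X i) t) \<le> tail_max t
      + (\<Sum>i<n. \<Sum>j\<in>{..<n}-{i}. prob ({\<omega>\<in>space M. t < X i \<omega>} \<inter> {\<omega>\<in>space M. t < X j \<omega>}))"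
    unfolding tail_max_eq_prob_Union unfolding tail_def by (rule sum_prob_le_prob_Union_plus_pairs) auto
  also have "\<dots> = tail_max t + pair_tails t"
    by (intro arg_cong2[where f="(+)"] sum.cong refl)
      (auto simp: prob_both_gt[symmetric] intro!: arg_cong[where f=prob])
  finally show ?thesis .
qed

lemma pair_tails_antimono: "s \<le> t \<Longrightarrow> pair_tails t \<le> pair_tails s"
  by (intro sum_mono mult_mono tail_antimono tail_nonneg) auto

lemma sum_tails_asymp_tail_max:
  assumes pos: "eventually (\<lambda>x. 0 < tail_max x) at_top"
    and below: "eventually (\<lambda>x. g x \<le> x) at_top"
    and pairs: "((\<lambda>x. pair_tails (g x) / tail_max x) \<longlongrightarrow> 0) at_top"
  shows "(\<lambda>x. \<Sum>i<n. tail M (X i) x) \<sim>[at_top] tail_max"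
proof (rule asymp_equivI', rule tendsto_sandwich)
  show "eventually (\<lambda>x. 1 \<le> (\<Sum>i<n. tail M (X i) x) / tail_max x) at_top"
    using pos by eventually_elim (use tail_max_le_sum_tails in simp)
  show "eventually (\<lambda>x. (\<Sum>i<n. tail M (X i) x) / tail_max x
          \<le> 1 + pair_tails (g x) / tail_max x) at_top"
    using pos below
  proof eventually_elim
    case (elim x)
    have "(\<Sum>i<n. tail M (X i) x) \<le> tail_max x + pair_tails (g x)"
      using sum_tails_le_tail_max_plus_pair_tails[of x] pair_tails_antimono[OF elim(2)] by simp
    then have "(\<Sum>i<n. tail M (X i) x) / tail_max x \<le> (tail_max x + pair_tails (g x)) / tail_max x"
      using elim(1) by (intro divide_right_mono) auto
    then show ?case
      using elim(1) by (simp add: add_divide_distrib)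
  qed
  show "((\<lambda>x. 1 + pair_tails (g x) / tail_max x) \<longlongrightarrow> 1) at_top"
    using tendsto_add[OF tendsto_const pairs] by simp
qed simp

lemma tail_le_prob_gt_others_ge:
  assumes i: "i < n"
  shows "tail M (X i) a * (1 - left_tails K)
           \<le> prob {\<omega>\<in>space M. a < X i \<omega> \<and> (\<forall>j\<in>{..<n}-{i}. - K \<le> X j \<omega>)}"
    (is "_ \<le> prob ?B")
proof -
  let ?E = "\<lambda>j. {\<omega>\<in>space M. a < X i \<omega> \<and> X j \<omega> < - K}"
  have U: "(\<Union>j\<in>{..<n}-{i}. ?E j) \<in> events"
    by (intro sets.finite_UN) auto
  have "tail M (X i) a \<le> prob (?B \<union> (\<Union>j\<in>{..<n}-{i}. ?E j))"
    unfolding tail_def using U by (intro finite_measure_mono) (auto simp: not_le)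
  also have "\<dots> \<le> prob ?B + prob (\<Union>j\<in>{..<n}-{i}. ?E j)"
    using U by (intro measure_subadditive) auto
  also have "prob (\<Union>j\<in>{..<n}-{i}. ?E j) \<le> (\<Sum>j\<in>{..<n}-{i}. prob (?E j))"
    by (intro finite_measure_subadditive_finite) auto
  also have "\<dots> = (\<Sum>j\<in>{..<n}-{i}. tail M (X i) a * tail M (\<lambda>\<omega>. - X j \<omega>) K)"
    using prob_indep_pair[OF indep, of i _ "{a<..}" "{..<- K}"] i
    by (intro sum.cong refl) (auto simp: tail_def less_minus_iff)
  also have "\<dots> \<le> tail M (X i) a * left_tails K"
    unfolding sum_distrib_left[symmetric]
    by (intro mult_left_mono sum_mono2 tail_nonneg) auto
  finally show ?thesis
    by (simp add: algebra_simps)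
qed

lemma tail_sum_ge_products:
  fixes x K :: real
  assumes "0 \<le> K"
  defines "a \<equiv> x + real n * K"
  shows "(\<Sum>i<n. tail M (X i) a) * (1 - left_tails K - (\<Sum>j<n. tail M (X j) a)) \<le> tail_sum x"
proof -
  define B where "B i = {\<omega>\<in>space M. a < X i \<omega> \<and> (\<forall>j\<in>{..<n}-{i}. - K \<le> X j \<omega>)}" for i
  have B_events: "B i \<in> events" for i
    unfolding B_def by measurable
  have "prob (\<Union>i<n. B i) \<le> tail_sum x"
    unfolding tail_def
  proof (intro finite_measure_mono subsetI)
    fix \<omega> assume "\<omega> \<in> (\<Union>i<n. B i)"
    then obtain i where "i < n" "\<omega> \<in> space M" "a < X i \<omega>" "\<forall>j\<in>{..<n}-{i}. - K \<le> X j \<omega>"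
      unfolding B_def by auto
    then have "a - (real n - 1) * K < (\<Sum>i<n. X i \<omega>)"
      by (intro sum_gt_of_component_gt[of i]) auto
    with \<open>0 \<le> K\<close> \<open>\<omega> \<in> space M\<close> show "\<omega> \<in> {\<omega> \<in> space M. x < (\<Sum>i<n. X i \<omega>)}"
      by (simp add: a_def algebra_simps)
  qed measurable
  moreover have "(\<Sum>i<n. prob (B i))
      \<le> prob (\<Union>i<n. B i) + (\<Sum>i<n. \<Sum>j\<in>{..<n}-{i}. prob (B i \<inter> B j))"
    using B_events by (intro sum_prob_le_prob_Union_plus_pairs) auto
  moreover have "(\<Sum>i<n. \<Sum>j\<in>{..<n}-{i}. prob (B i \<inter> B j))
      \<le> (\<Sum>i<n. \<Sum>j<n. tail M (X i) a * tail M (X j) a)"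
  proof -
    have "(\<Sum>i<n. \<Sum>j\<in>{..<n}-{i}. prob (B i \<inter> B j)) \<le> pair_tails a"
    proof (intro sum_mono)
      fix i j assume "i \<in> {..<n}" "j \<in> {..<n}-{i}"
      then have "prob (B i \<inter> B j) \<le> prob {\<omega>\<in>space M. a < X i \<omega> \<and> a < X j \<omega>}"
        by (intro finite_measure_mono) (auto simp: B_def)
      also have "\<dots> = tail M (X i) a * tail M (X j) a"
        using \<open>i \<in> _\<close> \<open>j \<in> _\<close> by (intro prob_both_gt) auto
      finally show "prob (B i \<inter> B j) \<le> tail M (X i) a * tail M (X j) a" .
    qed
    also have "\<dots> \<le> (\<Sum>i<n. \<Sum>j<n. tail M (X i) a * tail M (X j) a)"
      by (intro sum_mono sum_mono2) (auto intro: mult_nonneg_nonneg tail_nonneg)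
    finally show ?thesis .
  qed
  moreover have "(\<Sum>i<n. tail M (X i) a * (1 - left_tails K)) \<le> (\<Sum>i<n. prob (B i))"
    unfolding B_def by (intro sum_mono tail_le_prob_gt_others_ge) auto
  moreover have "(\<Sum>i<n. tail M (X i) a) * (1 - left_tails K - (\<Sum>j<n. tail M (X j) a))
      = (\<Sum>i<n. tail M (X i) a * (1 - left_tails K)) - (\<Sum>i<n. \<Sum>j<n. tail M (X i) a * tail M (X j) a)"
    by (simp only: sum_distrib_right[symmetric] sum_product[symmetric]) (simp add: algebra_simps)
  ultimately show ?thesis
    by linarith
qed

lemma tail_sum_lower_bound:
  assumes long: "long_tailed tail_max" and \<epsilon>: "0 < \<epsilon>" "\<epsilon> \<le> 1"
  shows "eventually (\<lambda>x. (1 - \<epsilon>) * tail_max x \<le> tail_sum x) at_top"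
proof -
  have "(left_tails \<longlongrightarrow> 0) at_top"
    by (intro tendsto_null_sum tail_tendsto_0) measurable
  then obtain K0 where K0: "\<And>K. K0 \<le> K \<Longrightarrow> left_tails K < \<epsilon> / 4"
    using order_tendstoD(2)[of left_tails 0 at_top "\<epsilon> / 4"] \<epsilon>
    by (auto simp: eventually_at_top_linorder)
  define K where "K = max K0 0"
  have K: "0 \<le> K" "left_tails K < \<epsilon> / 4"
    using K0 by (auto simp: K_def)
  have shift: "eventually (\<lambda>x. 1 - \<epsilon> / 4 < tail_max (x + real n * K) / tail_max x) at_top"
    using \<epsilon> by (intro order_tendstoD(1)[OF long_tailed_ratio_tendsto[OF long]]) auto
  have "((\<lambda>x. real n * tail_max x) \<longlongrightarrow> real n * 0) at_top"
    by (intro tendsto_mult tendsto_const tail_tendsto_0) measurable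
  then have small: "eventually (\<lambda>x. real n * tail_max x < \<epsilon> / 4) at_top"
    using \<epsilon> by (intro order_tendstoD(2)) auto
  show ?thesis
    using shift small long_tailed_eventually_pos[OF long]
  proof eventually_elim
    case (elim x)
    define a where "a = x + real n * K"
    note pos = elim(3)
    have "(\<Sum>j<n. tail M (X j) a) \<le> real n * tail_max a"
      using sum_mono[of "{..<n}" "\<lambda>j. tail M (X j) a" "\<lambda>_. tail_max a"] tail_le_tail_max by simp
    also have "\<dots> \<le> real n * tail_max x"
      using K by (intro mult_left_mono tail_antimono) (auto simp: a_def)
    finally have factor: "1 - \<epsilon> / 2 \<le> 1 - left_tails K - (\<Sum>j<n. tail M (X j) a)"
      using K elim(2) by simp
    have "1 - \<epsilon> \<le> (1 - \<epsilon> / 4) * (1 - \<epsilon> / 2)"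
      using \<epsilon> mult_nonneg_nonneg[of \<epsilon> \<epsilon>] by (simp add: algebra_simps)
    from mult_right_mono[OF this, of "tail_max x"] have "(1 - \<epsilon>) * tail_max x \<le> (1 - \<epsilon> / 4) * tail_max x * (1 - \<epsilon> / 2)"
      using pos by (simp add: mult_ac)
    also have "\<dots> \<le> tail_max a * (1 - \<epsilon> / 2)"
      using elim(1) pos \<epsilon> by (intro mult_right_mono) (auto simp: a_def less_divide_eq)
    also have "\<dots> \<le> (\<Sum>i<n. tail M (X i) a) * (1 - \<epsilon> / 2)"
      using \<epsilon> by (intro mult_right_mono tail_max_le_sum_tails) auto
    also have "\<dots> \<le> (\<Sum>i<n. tail M (X i) a) * (1 - left_tails K - (\<Sum>j<n. tail M (X j) a))"
      using factor by (intro mult_left_mono sum_nonneg tail_nonneg) auto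
    also have "\<dots> \<le> tail_sum x"
      unfolding a_def by (rule tail_sum_ge_products[OF K(1)])
    finally show ?case .
  qed
qed

lemma tail_sum_le_cover:
  fixes x g K :: real
  assumes "real n * g \<le> x"
  defines "y \<equiv> x - (real n - 1) * g"
  shows "tail_sum x \<le> pair_tails g + tail_max (x - (real n - 1) * K)
           + (\<Sum>k<n. tail M (X k) y) * (\<Sum>j<n. tail M (X j) K)"
proof -
  define A where "A = (\<Union>i<n. \<Union>j\<in>{..<n}-{i}. {\<omega>\<in>space M. g < X i \<omega> \<and> g < X j \<omega>})"
  define C where "C = {\<omega>\<in>space M. x - (real n - 1) * K < (MAX i\<in>{..<n}. X i \<omega>)}"
  define D where "D = (\<Union>k<n. \<Union>j\<in>{..<n}-{k}. {\<omega>\<in>space M. y < X k \<omega> \<and> K < X j \<omega>})"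
  have events: "A \<in> events" "C \<in> events" "D \<in> events"
    unfolding A_def C_def D_def by (intro sets.finite_UN; measurable)+ measurable
  have "{\<omega>\<in>space M. x < (\<Sum>i<n. X i \<omega>)} \<subseteq> A \<union> C \<union> D"
  proof
    fix \<omega> assume "\<omega> \<in> {\<omega>\<in>space M. x < (\<Sum>i<n. X i \<omega>)}"
    then have \<omega>: "\<omega> \<in> space M" "x < (\<Sum>i<n. X i \<omega>)"
      by auto
    from \<omega>(2) assms(1) show "\<omega> \<in> A \<union> C \<union> D"
    proof (cases rule: sum_gt_cases[where K = K])
      case (1 i j)
      then show ?thesis using \<omega>(1) unfolding A_def by blast
    next
      case (2 k)
      then have "x - (real n - 1) * K < (MAX i\<in>{..<n}. X i \<omega>)"
        by (intro less_le_trans[OF _ Max_ge]) auto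
      then show ?thesis using \<omega>(1) unfolding C_def by blast
    next
      case (3 k j)
      then show ?thesis using \<omega>(1) unfolding D_def y_def by blast
    qed
  qed
  then have "tail_sum x \<le> prob (A \<union> C \<union> D)"
    unfolding tail_def using events by (intro finite_measure_mono) auto
  also have "\<dots> \<le> prob (A \<union> C) + prob D"
    using events by (intro measure_subadditive) auto
  also have "\<dots> \<le> prob A + prob C + prob D"
    using events by (simp add: measure_subadditive)
  also have "prob A \<le> pair_tails g"
  proof -
    have "prob A \<le> (\<Sum>i<n. \<Sum>j\<in>{..<n}-{i}. prob {\<omega>\<in>space M. g < X i \<omega> \<and> g < X j \<omega>})"
      unfolding A_def by (intro prob_Union_pairs_le) auto
    also have "\<dots> = pair_tails g"
      by (intro sum.cong refl prob_both_gt) auto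
    finally show ?thesis .
  qed
  also have "prob C = tail_max (x - (real n - 1) * K)"
    unfolding C_def tail_def ..
  also have "prob D \<le> (\<Sum>k<n. tail M (X k) y) * (\<Sum>j<n. tail M (X j) K)"
  proof -
    have "prob D \<le> (\<Sum>k<n. \<Sum>j\<in>{..<n}-{k}. prob {\<omega>\<in>space M. y < X k \<omega> \<and> K < X j \<omega>})"
      unfolding D_def by (intro prob_Union_pairs_le) auto
    also have "\<dots> = (\<Sum>k<n. \<Sum>j\<in>{..<n}-{k}. tail M (X k) y * tail M (X j) K)"
      by (intro sum.cong refl prob_both_gt) auto
    also have "\<dots> \<le> (\<Sum>k<n. \<Sum>j<n. tail M (X k) y * tail M (X j) K)"
      by (intro sum_mono sum_mono2) (auto intro: mult_nonneg_nonneg tail_nonneg)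
    finally show ?thesis
      by (simp add: sum_product)
  qed
  finally show ?thesis
    by simp
qed

lemma tail_sum_upper_bound:
  assumes long: "long_tailed tail_max"
    and g_nonneg: "eventually (\<lambda>x. 0 \<le> g x) at_top"
    and shift: "shift_bounded tail_max (\<lambda>x. real n * g x)"
    and pairs: "((\<lambda>x. pair_tails (g x) / tail_max x) \<longlongrightarrow> 0) at_top"
    and \<epsilon>: "0 < \<epsilon>"
  shows "eventually (\<lambda>x. tail_sum x \<le> (1 + \<epsilon>) * tail_max x) at_top"
proof -
  obtain B where B: "0 < B" "eventually (\<lambda>x. tail_max (x - real n * g x) \<le> B * tail_max x) at_top"
    using shift unfolding shift_bounded_def by blast
  define \<eta> where "\<eta> = \<epsilon> / (3 * real n * B)"
  have "0 < \<eta>"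
    using \<epsilon> B n_pos by (simp add: \<eta>_def)
  have "((\<lambda>K. \<Sum>j<n. tail M (X j) K) \<longlongrightarrow> 0) at_top"
    by (intro tendsto_null_sum tail_tendsto_0) measurable
  then have "eventually (\<lambda>K. (\<Sum>j<n. tail M (X j) K) < \<eta>) at_top"
    using \<open>0 < \<eta>\<close> by (rule order_tendstoD(2))
  then obtain K where K: "(\<Sum>j<n. tail M (X j) K) < \<eta>"
    by (auto simp: eventually_at_top_linorder)
  have shifted: "eventually (\<lambda>x. tail_max (x + - ((real n - 1) * K)) / tail_max x < 1 + \<epsilon> / 3) at_top"
    using \<epsilon> by (intro order_tendstoD(2)[OF long_tailed_ratio_tendsto[OF long]]) auto
  have pairs_small: "eventually (\<lambda>x. pair_tails (g x) / tail_max x < \<epsilon> / 3) at_top"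
    using \<epsilon> by (intro order_tendstoD(2)[OF pairs]) auto
  have below: "eventually (\<lambda>x. real n * g x < x) at_top"
    using shift unfolding shift_bounded_def by blast
  show ?thesis
    using shifted pairs_small below g_nonneg B(2) long_tailed_eventually_pos[OF long]
  proof eventually_elim
    case (elim x)
    define y where "y = x - (real n - 1) * g x"
    note pos = elim(6)
    have "(\<Sum>k<n. tail M (X k) y) \<le> real n * tail_max y"
      using sum_mono[of "{..<n}" "\<lambda>k. tail M (X k) y" "\<lambda>_. tail_max y"] tail_le_tail_max by simp
    also have "\<dots> \<le> real n * tail_max (x - real n * g x)"
      using elim(4) by (intro mult_left_mono tail_antimono) (auto simp: y_def algebra_simps)
    also have "\<dots> \<le> real n * (B * tail_max x)"
      using elim(5) by (intro mult_left_mono) auto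
    finally have "(\<Sum>k<n. tail M (X k) y) * (\<Sum>j<n. tail M (X j) K) \<le> real n * (B * tail_max x) * \<eta>"
      using K B(1) pos by (intro mult_mono sum_nonneg tail_nonneg) auto
    also have "\<dots> = \<epsilon> / 3 * tail_max x"
      using n_pos B by (simp add: \<eta>_def field_simps)
    finally have "(\<Sum>k<n. tail M (X k) y) * (\<Sum>j<n. tail M (X j) K) \<le> \<epsilon> / 3 * tail_max x" .
    moreover have "pair_tails (g x) \<le> \<epsilon> / 3 * tail_max x"
      using elim(2) pos by (simp add: divide_less_eq)
    moreover have "tail_max (x - (real n - 1) * K) \<le> (1 + \<epsilon> / 3) * tail_max x"
      using elim(1) pos by (simp add: divide_less_eq)
    moreover have "tail_sum x \<le> pair_tails (g x) + tail_max (x - (real n - 1) * K)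
        + (\<Sum>k<n. tail M (X k) y) * (\<Sum>j<n. tail M (X j) K)"
      unfolding y_def using elim(3) by (intro tail_sum_le_cover) simp
    ultimately show ?case
      by (simp add: algebra_simps)
  qed
qed

lemma pair_tails_ratio_tendsto_0:
  assumes "\<forall>i<n. \<forall>j<n. i \<noteq> j \<longrightarrow>
             ((\<lambda>x. tail M (X i) (g x) * tail M (X j) (g x) / tail_max x) \<longlongrightarrow> 0) at_top"
  shows "((\<lambda>x. pair_tails (g x) / tail_max x) \<longlongrightarrow> 0) at_top"
  unfolding sum_divide_distrib using assms by (intro tendsto_null_sum) auto

lemma tail_sum_asymp_tail_max:
  assumes long: "long_tailed tail_max"
    and "eventually (\<lambda>x. 0 \<le> g x) at_top"
    and "shift_bounded tail_max (\<lambda>x. real n * g x)"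
    and "((\<lambda>x. pair_tails (g x) / tail_max x) \<longlongrightarrow> 0) at_top"
  shows "tail_sum \<sim>[at_top] tail_max"
proof (rule asymp_equivI', rule tendstoI)
  fix e :: real
  assume "0 < e"
  define \<epsilon> where "\<epsilon> = min (e / 2) 1"
  have \<epsilon>: "0 < \<epsilon>" "\<epsilon> \<le> 1" "\<epsilon> < e"
    using \<open>0 < e\<close> by (auto simp: \<epsilon>_def)
  show "eventually (\<lambda>x. dist (tail_sum x / tail_max x) 1 < e) at_top"
    using tail_sum_lower_bound[OF long \<epsilon>(1,2)] tail_sum_upper_bound[OF assms \<epsilon>(1)]
      long_tailed_eventually_pos[OF long]
  proof eventually_elim
    case (elim x)
    then have "1 - \<epsilon> \<le> tail_sum x / tail_max x" "tail_sum x / tail_max x \<le> 1 + \<epsilon>"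
      by (simp_all add: le_divide_eq divide_le_eq)
    with \<epsilon>(3) show ?case
      by (simp add: dist_real_def abs_le_iff)
  qed
qed

lemma tail_max_shift_bounded:
  assumes long: "long_tailed tail_max" and "GMDA tail_max h \<or> h \<in> H_class tail_max" "0 < c"
  shows "shift_bounded tail_max (\<lambda>x. c * h x)"
  using assms(2)
proof
  assume "GMDA tail_max h"
  moreover have "antimono tail_max"
    by (intro antimonoI tail_antimono) measurable
  moreover have "(tail_max \<longlongrightarrow> 0) at_top"
    by (intro tail_tendsto_0) measurable
  ultimately show ?thesis
    using long \<open>0 < c\<close> unfolding long_tailed_def by (intro GMDA_imp_shift_bounded) auto
next
  assume "h \<in> H_class tail_max"
  then show ?thesis
    using long \<open>0 < c\<close> unfolding long_tailed_def by (intro H_class_imp_shift_bounded) auto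
qed

theorem tail_sum_asymp_sum_tails:
  assumes long: "long_tailed tail_max"
    and g_nonneg: "eventually (\<lambda>x. 0 \<le> g x) at_top"
    and shift: "shift_bounded tail_max (\<lambda>x. real n * g x)"
    and pairs: "((\<lambda>x. pair_tails (g x) / tail_max x) \<longlongrightarrow> 0) at_top"
  shows "tail_sum \<sim>[at_top] (\<lambda>x. \<Sum>i<n. tail M (X i) x)"
proof -
  have "eventually (\<lambda>x. real n * g x < x) at_top"
    using shift unfolding shift_bounded_def by blast
  with g_nonneg have "eventually (\<lambda>x. g x \<le> x) at_top"
  proof eventually_elim
    case (elim x)
    have "g x \<le> real n * g x"
      using n_pos elim(1) by (simp add: mult_le_cancel_right1)
    with elim(2) show ?case by simp
  qed
  from long_tailed_eventually_pos[OF long] this pairs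
  have "(\<lambda>x. \<Sum>i<n. tail M (X i) x) \<sim>[at_top] tail_max"
    by (rule sum_tails_asymp_tail_max)
  with tail_sum_asymp_tail_max[OF assms] show ?thesis
    using asymp_equiv_trans asymp_equiv_symI by blast
qed

end

lemma (in prob_space) indep_real_family_restrict:
  assumes "\<And>i. i < n \<Longrightarrow> X i \<in> borel_measurable M" "indep_vars (\<lambda>_. borel) X {..<n}" "0 < n"
  shows "indep_real_family M (\<lambda>i. if i < n then X i else (\<lambda>_. 0)) n"
proof
  show "(if i < n then X i else (\<lambda>_. 0)) \<in> borel_measurable M" for i
    using assms(1) by simp
  show "indep_vars (\<lambda>_. borel) (\<lambda>i. if i < n then X i else (\<lambda>_. 0)) {..<n}"
    using assms(2) by (rule indep_vars_cong[THEN iffD1, rotated 3]) auto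
qed (use assms(3) in simp)

theorem corollary3p3:
  fixes M :: "'a measure" and X :: "nat \<Rightarrow> 'a \<Rightarrow> real" and n :: nat
  assumes "prob_space M"
    and "n \<ge> 2"
    and "\<And>i. i < n \<Longrightarrow> X i \<in> borel_measurable M"
    and "prob_space.indep_vars M (\<lambda>_. borel) X {..<n}"
    and "\<And>i. i < n \<Longrightarrow> tail M (X i) 0 > 0"
    and "long_tailed (tail M (\<lambda>\<omega>. MAX i\<in>{..<n}. X i \<omega>))"
    and "(\<exists>h. (\<forall>x. h x > 0)
              \<and> GMDA (tail M (\<lambda>\<omega>. MAX i\<in>{..<n}. X i \<omega>)) h
              \<and> long_tailed (tail M (\<lambda>\<omega>. MAX i\<in>{..<n}. X i \<omega>))
              \<and> (\<exists>L>0. \<forall>i<n. \<forall>j<n. i \<noteq> j \<longrightarrow>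
                   ((\<lambda>x. tail M (X i) (L * h x) * tail M (X j) (L * h x)
                         / tail M (\<lambda>\<omega>. MAX i\<in>{..<n}. X i \<omega>) x) \<longlongrightarrow> 0) at_top))
        \<or> (\<exists>h \<in> H_star (tail M (\<lambda>\<omega>. MAX i\<in>{..<n}. X i \<omega>)).
              (\<exists>L>0. \<forall>i<n. \<forall>j<n. i \<noteq> j \<longrightarrow>
                   ((\<lambda>x. tail M (X i) (L * h x) * tail M (X j) (L * h x)
                         / tail M (\<lambda>\<omega>. MAX i\<in>{..<n}. X i \<omega>) x) \<longlongrightarrow> 0) at_top))"
  shows "(\<lambda>x. tail M (\<lambda>\<omega>. \<Sum>i<n. X i \<omega>) x) \<sim>[at_top] (\<lambda>x. \<Sum>i<n. tail M (X i) x)"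
proof -
  interpret prob_space M by fact
  define Y where "Y i = (if i < n then X i else (\<lambda>_. 0))" for i
  interpret Y: indep_real_family M Y n
    unfolding Y_def using assms(2-4) by (intro indep_real_family_restrict) auto
  have Y_eq: "(\<lambda>\<omega>. MAX i\<in>{..<n}. Y i \<omega>) = (\<lambda>\<omega>. MAX i\<in>{..<n}. X i \<omega>)"
    "(\<lambda>\<omega>. \<Sum>i<n. Y i \<omega>) = (\<lambda>\<omega>. \<Sum>i<n. X i \<omega>)" "\<And>i. i < n \<Longrightarrow> Y i = X i"
    by (auto simp: Y_def intro!: ext arg_cong[where f=Max] sum.cong)
  obtain h L where hyp: "GMDA Y.tail_max h \<or> h \<in> H_class Y.tail_max" and "0 < L"
    and h_pos: "eventually (\<lambda>x. 0 < h x) at_top"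
    and pairs: "\<forall>i<n. \<forall>j<n. i \<noteq> j \<longrightarrow> ((\<lambda>x. tail M (Y i) (L * h x) * tail M (Y j) (L * h x)
                  / Y.tail_max x) \<longlongrightarrow> 0) at_top"
    using assms(7) unfolding Y_eq H_star_def
    by (auto simp: Y_eq(3) H_class_def intro: always_eventually)
  have "shift_bounded Y.tail_max (\<lambda>x. (real n * L) * h x)"
    using assms(2,6) \<open>0 < L\<close> hyp by (intro Y.tail_max_shift_bounded) (auto simp: Y_eq)
  then have "Y.tail_sum \<sim>[at_top] (\<lambda>x. \<Sum>i<n. tail M (Y i) x)"
    using assms(6) h_pos pairs \<open>0 < L\<close>
    by (intro Y.tail_sum_asymp_sum_tails[where g = "\<lambda>x. L * h x"] Y.pair_tails_ratio_tendsto_0)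
      (auto simp: mult.assoc Y_eq elim: eventually_mono)
  then show ?thesis
    by (simp add: Y_eq)
qed

end
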